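(* Let $T_R:\mathbb{Z}\to\mathbb{Z}$ be defined by $T_R(n)=3n/4$ if $n\equiv 0\pmod 4$, $T_R(n)=(n-2)/4$ if $n\equiv 2\pmod 4$, and $T_R(n)=(3n+1)/2$ if $n$ is odd. Define $T_R^*:\mathbb{Z}\to\mathbb{Z}$ by $T_R^*(n)=T_R(n)$ if $n\equiv 1\pmod 2$ or $n\equiv 0\pmod 4$; $T_R^*(n)=T_R^2(n)$ if $n\equiv 6\pmod 8$ or $n\equiv 2\pmod{16}$; and $T_R^*(n)=T_R^3(n)$ if $n\equiv 26\pmod{32}$, $n\equiv 10\pmod{64}$ or $n\equiv 42\pmod{64}$. Then for every integer $n$, the $T_R^*$-trajectory $((T_R^* )^k(n))_{k\ge0}$ consists of finitely many numbers congruent to $1\pmod 3$ followed only by numbers congruent to $0$ or $2\pmod 3$; that is, there is $K\ge 0$ with $(T_R^* )^k(n)\equiv 1\pmod 3$ for $0\le k<K$ and $(T_R^* )^k(n)\not\equiv 1\pmod 3$ for all $k\ge K$.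
   Context: $T_R^k$ and $(T_R^* )^k$ denote $k$-fold iterates, with the $0$-th iterate the identity. *)

theory Defs
  imports Main
begin

definition TR :: "int \<Rightarrow> int" where
  "TR n = (if n mod 4 = 0 then 3 * n div 4
           else if n mod 4 = 2 then (n - 2) div 4
           else (3 * n + 1) div 2)"

definition TRs :: "int \<Rightarrow> int" where
  "TRs n = (if n mod 2 = 1 \<or> n mod 4 = 0 then TR n
            else if n mod 8 = 6 \<or> n mod 16 = 2 then (TR ^^ 2) n
            else if n mod 32 = 26 \<or> n mod 64 = 10 \<or> n mod 64 = 42 then (TR ^^ 3) n
            else undefined)"

end

theory Submission
  imports Defs
begin

(* The seven residue classes in the definition of TRs cover all integers. On the class
   64q+42 TRs gives q, which is congruent to 64q+42 modulo 3; on the other six it gives 3q or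
   3q+2. So a value congruent to 1 modulo 3 has a predecessor congruent to 1 modulo 3 of
   strictly larger absolute value: the indices k with (TRs^^k) n mod 3 = 1 form an initial
   segment, which is finite by infinite descent. *)

lemma mod_double_modulus_cases:
  fixes m b :: int
  assumes "m mod b = r"
  shows "m mod (2 * b) = r \<or> m mod (2 * b) = r + b"
  using assms by (simp add: mult.commute[of 2] zmod_zmult2_eq) presburger

lemma mod_eq_imp_mod_dvd_eq:
  fixes m :: int
  shows "m mod b = r \<Longrightarrow> c dvd b \<Longrightarrow> m mod c = r mod c"
  using mod_mod_cancel by metis

lemma int_residue_classes_mod_64:
  fixes m :: int
  obtains q where "m = 2 * q + 1" | q where "m = 4 * q" | q where "m = 8 * q + 6"
    | q where "m = 16 * q + 2" | q where "m = 32 * q + 26" | q where "m = 64 * q + 10"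
    | q where "m = 64 * q + 42"
proof -
  have "m mod 2 = 1 \<or> m mod 2 = 0"
    by presburger
  then have "m mod 2 = 1 \<or> m mod 4 = 0 \<or> m mod 4 = 2"
    using mod_double_modulus_cases[of m 2 0] by auto
  then have "m mod 2 = 1 \<or> m mod 4 = 0 \<or> m mod 8 = 6 \<or> m mod 8 = 2"
    using mod_double_modulus_cases[of m 4 2] by auto
  then have "m mod 2 = 1 \<or> m mod 4 = 0 \<or> m mod 8 = 6 \<or> m mod 16 = 2 \<or> m mod 16 = 10"
    using mod_double_modulus_cases[of m 8 2] by auto
  then have "m mod 2 = 1 \<or> m mod 4 = 0 \<or> m mod 8 = 6 \<or> m mod 16 = 2 \<or> m mod 32 = 26
      \<or> m mod 32 = 10"
    using mod_double_modulus_cases[of m 16 10] by auto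
  then have "m mod 2 = 1 \<or> m mod 4 = 0 \<or> m mod 8 = 6 \<or> m mod 16 = 2 \<or> m mod 32 = 26
      \<or> m mod 64 = 10 \<or> m mod 64 = 42"
    using mod_double_modulus_cases[of m 32 10] by auto
  then show ?thesis
    by (elim disjE; metis mult_div_mod_eq add.right_neutral that)
qed

lemma ex_threshold_if_downward_closed:
  fixes P :: "nat \<Rightarrow> bool"
  assumes downward_closed: "\<And>k. P (Suc k) \<Longrightarrow> P k" and not_always: "\<not> (\<forall>k. P k)"
  shows "\<exists>K. (\<forall>k<K. P k) \<and> (\<forall>k\<ge>K. \<not> P k)"
proof (intro exI conjI allI impI)
  let ?K = "LEAST k. \<not> P k"
  show "P k" if "k < ?K" for k
    using that not_less_Least by blast
  show "\<not> P k" if "k \<ge> ?K" for k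
  proof
    assume "P k"
    with \<open>k \<ge> ?K\<close> have "P ?K"
      by (induction rule: inc_induct) (use downward_closed in blast)+
    moreover have "\<not> P ?K"
      using not_always LeastI_ex[of "\<lambda>k. \<not> P k"] by blast
    ultimately show False by contradiction
  qed
qed

lemma no_infinite_abs_descent: "\<not> (\<forall>k. \<bar>f (Suc k)\<bar> < \<bar>f k :: int\<bar>)"
proof
  assume "\<forall>k. \<bar>f (Suc k)\<bar> < \<bar>f k\<bar>"
  then have "\<forall>k. (f (Suc k), f k) \<in> measure (\<lambda>x. nat \<bar>x\<bar>)"
    by (simp add: nat_less_eq_zless del: zless_nat_conj)
  then show False
    using wf_no_infinite_down_chainE[OF wf_measure] by blast
qed

lemma TR_odd [simp]: "TR (2 * q + 1) = 3 * q + 2"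
proof -
  have "(2 * q + 1) mod 4 mod 2 = 1"
    by (simp add: mod_mod_cancel)
  then have "(2 * q + 1) mod 4 \<noteq> 0" "(2 * q + 1) mod 4 \<noteq> 2"
    by auto
  then show ?thesis
    unfolding TR_def by simp
qed

lemma TR_mult_4 [simp]: "TR (4 * q) = 3 * q"
  unfolding TR_def by simp

lemma TR_mult_4_plus_2 [simp]: "TR (4 * q + 2) = q"
  unfolding TR_def by simp

lemma TRs_by_residue:
  fixes m :: int
  shows "m mod 2 = 1 \<or> m mod 4 = 0 \<Longrightarrow> TRs m = TR m"
    and "m mod 8 = 6 \<or> m mod 16 = 2 \<Longrightarrow> TRs m = TR (TR m)"
    and "m mod 32 = 26 \<or> m mod 64 = 10 \<or> m mod 64 = 42 \<Longrightarrow> TRs m = TR (TR (TR m))"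
proof -
  show "TRs m = TR m" if "m mod 2 = 1 \<or> m mod 4 = 0"
    using that by (simp add: TRs_def)
  show "TRs m = TR (TR m)" if residue: "m mod 8 = 6 \<or> m mod 16 = 2"
  proof -
    have "m mod 4 = 2"
      using residue mod_eq_imp_mod_dvd_eq[of m 8 _ 4] mod_eq_imp_mod_dvd_eq[of m 16 _ 4] by auto
    then have "m mod 2 = 0"
      using mod_eq_imp_mod_dvd_eq[of m 4 2 2] by simp
    with \<open>m mod 4 = 2\<close> residue show ?thesis
      by (simp add: TRs_def numeral_2_eq_2)
  qed
  show "TRs m = TR (TR (TR m))" if residue: "m mod 32 = 26 \<or> m mod 64 = 10 \<or> m mod 64 = 42"
  proof -
    have "m mod 16 = 10"
      using residue mod_eq_imp_mod_dvd_eq[of m 32 _ 16] mod_eq_imp_mod_dvd_eq[of m 64 _ 16] by auto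
    then have "m mod 8 = 2" "m mod 4 = 2" "m mod 2 = 0"
      using mod_eq_imp_mod_dvd_eq[of m 16 10] by simp_all
    with \<open>m mod 16 = 10\<close> residue show ?thesis
      by (simp add: TRs_def numeral_3_eq_3)
  qed
qed

lemma TRs_residue_classes:
  "TRs (2 * q + 1) = 3 * q + 2"
  "TRs (4 * q) = 3 * q"
  "TRs (8 * q + 6) = 3 * q + 2"
  "TRs (16 * q + 2) = 3 * q"
  "TRs (32 * q + 26) = 3 * q + 2"
  "TRs (64 * q + 10) = 3 * q"
  "TRs (64 * q + 42) = q"
proof -
  have "TRs (8 * q + 6) = TR (TR (4 * (2 * q + 1) + 2))"
    "TRs (16 * q + 2) = TR (TR (4 * (4 * q) + 2))"
    by (subst TRs_by_residue(2); simp add: algebra_simps)+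
  moreover have "TRs (32 * q + 26) = TR (TR (TR (4 * (4 * (2 * q + 1) + 2) + 2)))"
    "TRs (64 * q + 10) = TR (TR (TR (4 * (4 * (4 * q) + 2) + 2)))"
    "TRs (64 * q + 42) = TR (TR (TR (4 * (4 * (4 * q + 2) + 2) + 2)))"
    by (subst TRs_by_residue(3); simp add: algebra_simps)+
  ultimately show
    "TRs (8 * q + 6) = 3 * q + 2"
    "TRs (16 * q + 2) = 3 * q"
    "TRs (32 * q + 26) = 3 * q + 2"
    "TRs (64 * q + 10) = 3 * q"
    "TRs (64 * q + 42) = q"
    by (simp_all only: TR_odd TR_mult_4 TR_mult_4_plus_2)
  show "TRs (2 * q + 1) = 3 * q + 2" "TRs (4 * q) = 3 * q"
    by (subst TRs_by_residue(1); simp)+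
qed

lemma TRs_mod_3_eq_1E:
  assumes "TRs m mod 3 = 1"
  obtains q where "m = 64 * q + 42" "TRs m = q"
  using assms by (cases m rule: int_residue_classes_mod_64) (auto simp: TRs_residue_classes)

lemma TRs_mod_3_eq_1_imp_mod_3_eq_1:
  assumes "TRs m mod 3 = 1"
  shows "m mod 3 = 1"
proof -
  obtain q where "m = 64 * q + 42" "TRs m = q"
    using assms by (rule TRs_mod_3_eq_1E)
  then have "m = TRs m + 3 * (21 * TRs m + 14)"
    by simp
  then show ?thesis
    using assms by (metis mod_mult_self2)
qed

lemma abs_TRs_less_if_mod_3_eq_1: "TRs m mod 3 = 1 \<Longrightarrow> \<bar>TRs m\<bar> < \<bar>m\<bar>"
  by (erule TRs_mod_3_eq_1E) arith

theorem theorem3: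
  fixes n :: int
  shows "\<exists>K::nat. (\<forall>k<K. (TRs ^^ k) n mod 3 = 1) \<and> (\<forall>k\<ge>K. (TRs ^^ k) n mod 3 \<noteq> 1)"
proof (rule ex_threshold_if_downward_closed)
  show "(TRs ^^ k) n mod 3 = 1" if "(TRs ^^ Suc k) n mod 3 = 1" for k
    using that TRs_mod_3_eq_1_imp_mod_3_eq_1 by simp
  show "\<not> (\<forall>k. (TRs ^^ k) n mod 3 = 1)"
  proof
    assume always: "\<forall>k. (TRs ^^ k) n mod 3 = 1"
    have "\<forall>k. \<bar>(TRs ^^ Suc k) n\<bar> < \<bar>(TRs ^^ k) n\<bar>"
      using abs_TRs_less_if_mod_3_eq_1 always[rule_format, of "Suc _"] by simp
    then show False
      using no_infinite_abs_descent[of "\<lambda>k. (TRs ^^ k) n"] by simp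
  qed
qed

end
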